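(* Let $q:\mathcal U\to\mathbb R^p$ be continuous, differentiable on $\mathrm{Int}(\mathcal U)$, with $Dq$ symmetric and positive definite on $\mathrm{Int}(\mathcal U)$, and suppose $\mathcal Y:=q(\mathcal U)$ is convex. Then $q(u)\in\mathrm{Int}(\mathcal Y)$ for every $u\in\mathrm{Int}(\mathcal U)$.
   Context: $\mathcal U\subset\mathbb R^p$ is a compact convex set with nonempty interior. $Dq$ denotes the Jacobian of $q$. *)

theory Defs
  imports "HOL-Analysis.Analysis"
begin

definition jacobian :: "(real^'n \<Rightarrow> real^'m) \<Rightarrow> real^'n \<Rightarrow> real^'n^'m" where
  "jacobian q u = matrix (frechet_derivative q (at u))"

definition symmetric_matrix :: "real^'n^'n \<Rightarrow> bool" where
  "symmetric_matrix A \<longleftrightarrow> transpose A = A"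

definition pos_def_matrix :: "real^'n^'n \<Rightarrow> bool" where
  "pos_def_matrix A \<longleftrightarrow> (\<forall>x. x \<noteq> 0 \<longrightarrow> x \<bullet> (A *v x) > 0)"

end

theory Submission
  imports Defs
begin

(* If q u lay on the boundary of the convex set q(U), a supporting functional c would give
   c . q v <= c . q u for all v in U. But moving from the interior point u in direction c,
   the function t |-> c . q (u + t c) has derivative c . Dq(u) c > 0 at t = 0 by positive
   definiteness, so it strictly increases while staying in U: a contradiction. *)

lemma convex_supporting_functional:
  fixes S :: "'a::euclidean_space set"
  assumes "convex S" "x \<in> S" "x \<notin> interior S"
  obtains c where "c \<noteq> 0" "\<And>y. y \<in> S \<Longrightarrow> c \<bullet> y \<le> c \<bullet> x"
proof (cases "interior S = {}")
  case True
  then obtain a b where "a \<noteq> 0" "S \<subseteq> {y. a \<bullet> y = b}"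
    using empty_interior_subset_hyperplane[OF assms(1)] by blast
  moreover from this(2) have "a \<bullet> y = a \<bullet> x" if "y \<in> S" for y
    using assms(2) that by blast
  ultimately show ?thesis
    using that by fastforce
next
  case False
  then have "x \<notin> rel_interior S"
    using assms(3) by (simp add: rel_interior_nonempty_interior)
  moreover have "x \<in> closure S"
    using assms(2) closure_subset by blast
  ultimately obtain a where "a \<noteq> 0" "\<And>y. y \<in> closure S \<Longrightarrow> a \<bullet> x \<le> a \<bullet> y"
    using supporting_hyperplane_relative_frontier[OF assms(1)] by metis
  moreover from this(2) have "(- a) \<bullet> y \<le> (- a) \<bullet> x" if "y \<in> S" for y
    using that closure_subset by fastforce
  ultimately show ?thesis
    using that[of "- a"] by simp
qed

lemma has_derivative_inner_increases_in_interior: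
  fixes f :: "'a::real_normed_vector \<Rightarrow> 'b::real_inner"
  assumes f: "(f has_derivative D) (at u)" and u: "u \<in> interior U"
    and pos: "0 < c \<bullet> D w"
  obtains v where "v \<in> U" "c \<bullet> f u < c \<bullet> f v"
proof -
  define g where "g t = c \<bullet> f (u + t *\<^sub>R w)" for t :: real
  have line: "((\<lambda>t. u + t *\<^sub>R w) has_derivative (\<lambda>t. t *\<^sub>R w)) (at 0)"
    by (auto intro!: derivative_eq_intros)
  have "((\<lambda>t. f (u + t *\<^sub>R w)) has_derivative (\<lambda>t. D (t *\<^sub>R w))) (at 0)"
    using diff_chain_at[OF line, of f D] f by (simp add: o_def)
  then have "(g has_derivative (\<lambda>t. c \<bullet> D (t *\<^sub>R w))) (at 0)"
    unfolding g_def by (auto intro!: derivative_eq_intros)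
  moreover have "(\<lambda>t. c \<bullet> D (t *\<^sub>R w)) = (\<lambda>t. (c \<bullet> D w) * t)"
    using linear_scale[OF has_derivative_linear[OF f]] by (simp add: fun_eq_iff)
  ultimately have "(g has_real_derivative c \<bullet> D w) (at 0)"
    by (simp add: has_field_derivative_def)
  then obtain d where "d > 0" "\<And>t. 0 < t \<Longrightarrow> t < d \<Longrightarrow> g 0 < g t"
    using DERIV_pos_inc_right[OF _ pos] by (metis add_0)
  then have "\<forall>\<^sub>F t in at_right 0. g 0 < g t"
    by (auto simp: eventually_at_right_field intro!: exI[of _ d])
  moreover have "\<forall>\<^sub>F t in at_right 0. u + t *\<^sub>R w \<in> U"
  proof -
    have "((\<lambda>t::real. u + t *\<^sub>R w) \<longlongrightarrow> u) (at_right 0)"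
      by (auto intro!: tendsto_eq_intros)
    then have "\<forall>\<^sub>F t in at_right 0. u + t *\<^sub>R w \<in> interior U"
      using topological_tendstoD u by blast
    then show ?thesis
      by (rule eventually_mono) (use interior_subset in blast)
  qed
  ultimately have "\<forall>\<^sub>F t in at_right 0. g 0 < g t \<and> u + t *\<^sub>R w \<in> U"
    by (rule eventually_conj)
  then obtain t where "g 0 < g t" "u + t *\<^sub>R w \<in> U"
    using eventually_happens'[of "at_right (0::real)"] by auto
  then show ?thesis
    using that[of "u + t *\<^sub>R w"] unfolding g_def by simp
qed

lemma jacobian_mult_vector:
  assumes "q differentiable (at u)"
  shows "jacobian q u *v x = frechet_derivative q (at u) x"
  using assms unfolding jacobian_def
  by (simp add: matrix_works has_derivative_linear frechet_derivative_works)

theorem mainTheorem11: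
  fixes U :: "(real^'p) set" and q :: "real^'p \<Rightarrow> real^'p"
  assumes "compact U" and "convex U" and "interior U \<noteq> {}"
    and "continuous_on U q"
    and "\<And>u. u \<in> interior U \<Longrightarrow> q differentiable (at u)"
    and "\<And>u. u \<in> interior U \<Longrightarrow> symmetric_matrix (jacobian q u)"
    and "\<And>u. u \<in> interior U \<Longrightarrow> pos_def_matrix (jacobian q u)"
    and "convex (q ` U)"
  shows "\<forall>u \<in> interior U. q u \<in> interior (q ` U)"
proof (rule ballI, rule ccontr)
  fix u assume u: "u \<in> interior U" and "q u \<notin> interior (q ` U)"
  moreover have "q u \<in> q ` U"
    using u interior_subset by blast
  ultimately obtain c where c: "c \<noteq> 0" and supp: "\<And>y. y \<in> q ` U \<Longrightarrow> c \<bullet> y \<le> c \<bullet> q u"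
    using convex_supporting_functional[OF assms(8)] by blast
  have "0 < c \<bullet> (jacobian q u *v c)"
    using assms(7)[OF u] c unfolding pos_def_matrix_def by blast
  then have "0 < c \<bullet> frechet_derivative q (at u) c"
    by (simp add: jacobian_mult_vector assms(5) u)
  moreover have "(q has_derivative frechet_derivative q (at u)) (at u)"
    using assms(5)[OF u] by (simp add: frechet_derivative_works)
  ultimately obtain v where "v \<in> U" "c \<bullet> q u < c \<bullet> q v"
    using has_derivative_inner_increases_in_interior[OF _ u] by blast
  moreover have "c \<bullet> q v \<le> c \<bullet> q u"
    using supp \<open>v \<in> U\<close> by blast
  ultimately show False
    by simp
qed

end
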